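(* Let $X$ be a finite set and $r,k$ integers with $r\ge 3$, $k\ge r$, $k\ge 5$ and $|X|-k\ge\max(7,r)$. Let $\mathcal{F}$ be a clone on $X$ such that either $f_{r;1,2}\in\mathcal{F}$, or (weaker) for every one-to-one $\bar a\in X^r$ there is $f_{\bar a}\in\mathcal{F}$ with $f_{\bar a}(\bar a)=a_2$ and $f_{\bar a}(\bar b)=b_1$ for every $\bar b\in X^r$ that is not one-to-one. Let $\mathfrak{C}$ be a nonempty symmetric family of choice functions for $\binom{X}{k}$ which is closed under every $f\in\mathcal{F}$. Then $\mathfrak{C}$ is full, i.e. every choice function for $\binom{X}{k}$ belongs to $\mathfrak{C}$.
   Context: A clone on $X$: set of finitary operations on $X$ containing all projections and closed under composition. $\binom{X}{k}=\{Y\subseteq X:|Y|=k\}$; a choice function $c$ satisfies $c(Y)\in Y$. Symmetric: for every permutation $\pi$ of $X$ and $c\in\mathfrak{C}$, $(\pi*c)(Y)=\pi^{-1}(c(\pi(Y)))$ is in $\mathfrak{C}$. $\mathfrak{C}$ is closed under an $n$-place $f$ if for all $c_1,\dots,c_n\in\mathfrak{C}$, the function $Y\mapsto f(c_1(Y),\dots,c_n(Y))$ is in $\mathfrak{C}$. $f_{r;1,2}(\bar x)=x_1$ if $\bar x\in X^r$ has a repetition and $x_2$ otherwise. *)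

theory Defs
  imports Main
begin

(* An n-place operation on X is represented as a pair (n, f) with f :: 'a list => 'a,
   intended to be applied to argument lists of length n whose entries lie in X. *)

definition ksubsets :: "'a set \<Rightarrow> nat \<Rightarrow> 'a set set" where
  "ksubsets X k = {Y. Y \<subseteq> X \<and> card Y = k}"

definition is_clone :: "'a set \<Rightarrow> (nat \<times> ('a list \<Rightarrow> 'a)) set \<Rightarrow> bool" where
  "is_clone X F \<longleftrightarrow>
     (\<forall>(n, f)\<in>F. \<forall>xs. length xs = n \<and> set xs \<subseteq> X \<longrightarrow> f xs \<in> X) \<and>
     (\<forall>n i. i < n \<longrightarrow> (n, \<lambda>xs. xs ! i) \<in> F) \<and>
     (\<forall>n f m g. (n, f) \<in> F \<and> (\<forall>i<n. (m, g i) \<in> F) \<longrightarrow>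
        (m, \<lambda>xs. f (map (\<lambda>i. g i xs) [0..<n])) \<in> F)"

definition choice_fun :: "'a set \<Rightarrow> nat \<Rightarrow> ('a set \<Rightarrow> 'a) \<Rightarrow> bool" where
  "choice_fun X k c \<longleftrightarrow> (\<forall>Y\<in>ksubsets X k. c Y \<in> Y) \<and> (\<forall>Y. Y \<notin> ksubsets X k \<longrightarrow> c Y = undefined)"

definition perm_act :: "'a set \<Rightarrow> nat \<Rightarrow> ('a \<Rightarrow> 'a) \<Rightarrow> ('a set \<Rightarrow> 'a) \<Rightarrow> ('a set \<Rightarrow> 'a)" where
  "perm_act X k \<pi> c = (\<lambda>Y. if Y \<in> ksubsets X k then the_inv_into X \<pi> (c (\<pi> ` Y)) else undefined)"

definition symmetric_family :: "'a set \<Rightarrow> nat \<Rightarrow> ('a set \<Rightarrow> 'a) set \<Rightarrow> bool" where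
  "symmetric_family X k C \<longleftrightarrow> (\<forall>\<pi> c. bij_betw \<pi> X X \<and> c \<in> C \<longrightarrow> perm_act X k \<pi> c \<in> C)"

definition closed_under :: "'a set \<Rightarrow> nat \<Rightarrow> ('a set \<Rightarrow> 'a) set \<Rightarrow> nat \<Rightarrow> ('a list \<Rightarrow> 'a) \<Rightarrow> bool" where
  "closed_under X k C n f \<longleftrightarrow>
     (\<forall>cs. (\<forall>i<n. cs i \<in> C) \<longrightarrow>
        (\<lambda>Y. if Y \<in> ksubsets X k then f (map (\<lambda>i. cs i Y) [0..<n]) else undefined) \<in> C)"

definition f_r12 :: "'a list \<Rightarrow> 'a" where
  "f_r12 xs = (if distinct xs then xs ! 1 else xs ! 0)"

definition agree_on :: "'a set \<Rightarrow> nat \<Rightarrow> ('a list \<Rightarrow> 'a) \<Rightarrow> ('a list \<Rightarrow> 'a) \<Rightarrow> bool" where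
  "agree_on X n f g \<longleftrightarrow> (\<forall>xs. length xs = n \<and> set xs \<subseteq> X \<longrightarrow> f xs = g xs)"

end

theory Submission
  imports Defs "HOL-Combinatorics.Transposition"
begin

(* Call (x, y) attained at two k-sets Y0, Y1 if some member of C picks x from Y0 and y from
   Y1.  Symmetry under transpositions makes every single value attained.  Applying the
   separating operation to p, q, g in C, padded by further members so that the r-tuple is
   one-to-one at Y0, gives a member agreeing with q at Y0 and with p wherever p, q, g collide.
   With it, a single collision (x1, y), (x2, y) with x1 \<noteq> x2 forces every pair to be
   attained.  A collision exists for Y0 \<noteq> Y1: if Y0 - Y1 has two points, a transposition
   inside it produces one; if Y0 = A + {l} and Y1 = A + {l'}, its absence would make every
   member of C either keep its choice in A or follow the exchange of l for l'.  By symmetry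
   this would then hold for every such pair of adjacent k-sets, which is impossible once X has
   a point outside a k-set.  Since all pairs are attained, a member of C can be changed at a
   single k-set, and changing one k-set at a time reaches every choice function. *)

lemma ksubsets_finite: "finite X \<Longrightarrow> finite (ksubsets X k)"
  by (rule finite_subset[of _ "Pow X"]) (auto simp: ksubsets_def)

lemma ksubsets_image:
  assumes "bij_betw \<pi> X X" and "Y \<in> ksubsets X k"
  shows "\<pi> ` Y \<in> ksubsets X k"
proof -
  have "Y \<subseteq> X" "card Y = k" using assms(2) by (auto simp: ksubsets_def)
  moreover have "inj_on \<pi> Y" using assms(1) \<open>Y \<subseteq> X\<close> by (auto simp: bij_betw_def intro: inj_on_subset)
  ultimately show ?thesis using assms(1) by (auto simp: ksubsets_def card_image bij_betw_def)
qed

lemma insert_in_ksubsets: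
  "finite X \<Longrightarrow> B \<subseteq> X \<Longrightarrow> card B + 1 = k \<Longrightarrow> l \<in> X \<Longrightarrow> l \<notin> B \<Longrightarrow> insert l B \<in> ksubsets X k"
  by (auto simp: ksubsets_def finite_subset)

lemma choice_fun_eqI:
  assumes "choice_fun X k c" and "choice_fun X k d" and "\<And>Y. Y \<in> ksubsets X k \<Longrightarrow> c Y = d Y"
  shows "c = d"
  using assms by (metis choice_fun_def ext)

lemma choice_fun_upd:
  "choice_fun X k c \<Longrightarrow> Y \<in> ksubsets X k \<Longrightarrow> v \<in> Y \<Longrightarrow> choice_fun X k (c(Y := v))"
  by (auto simp: choice_fun_def)

lemma perm_act_eq_iff:
  assumes \<pi>: "bij_betw \<pi> X X" and c: "choice_fun X k c" and Y: "Y \<in> ksubsets X k" and x: "x \<in> X"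
  shows "perm_act X k \<pi> c Y = x \<longleftrightarrow> c (\<pi> ` Y) = \<pi> x"
proof -
  have inj: "inj_on \<pi> X" using \<pi> by (rule bij_betw_imp_inj_on)
  have "c (\<pi> ` Y) \<in> \<pi> ` Y" using c ksubsets_image[OF \<pi> Y] by (auto simp: choice_fun_def)
  then have "c (\<pi> ` Y) \<in> \<pi> ` X" using Y by (auto simp: ksubsets_def)
  then show ?thesis
    using Y x inj by (auto simp: perm_act_def f_the_inv_into_f the_inv_into_f_eq dest: inj_onD)
qed

lemma closed_under_map:
  assumes f: "closed_under X k C n f" and "set cs \<subseteq> C" and "length cs = n"
  shows "(\<lambda>Y. if Y \<in> ksubsets X k then f (map (\<lambda>c. c Y) cs) else undefined) \<in> C"
proof -
  have tuple: "map (\<lambda>i. (cs ! i) Y) [0..<n] = map (\<lambda>c. c Y) cs" for Y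
    by (rule nth_equalityI) (simp_all add: assms(3))
  have "cs ! i \<in> C" if "i < n" for i using nth_mem[of i cs] assms(2,3) that by auto
  then have "(\<lambda>Y. if Y \<in> ksubsets X k then f (map (\<lambda>i. (cs ! i) Y) [0..<n]) else undefined) \<in> C"
    by (rule f[unfolded closed_under_def, rule_format])
  then show ?thesis unfolding tuple .
qed

lemma ex_other_than_two:
  assumes "finite Y" and "3 \<le> card Y"
  shows "\<exists>z\<in>Y. z \<noteq> a \<and> z \<noteq> b"
proof (rule ccontr)
  assume "\<not> ?thesis"
  then have "card Y \<le> card {a, b}" using assms(1) by (intro card_mono) auto
  also have "\<dots> \<le> 2" by (simp add: card_insert_le_m1)
  finally show False using assms(2) by simp
qed

lemma ex_singleton_diff:
  assumes "finite Y0" "finite Y1" "card Y0 = card Y1" "Y0 - Y1 = {l}"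
  shows "\<exists>l'. Y1 - Y0 = {l'}"
proof -
  have "card (Y1 - Y0) = card (Y0 - Y1)"
    using assms(1-3) by (simp add: card_Diff_subset_Int Int_commute)
  then show ?thesis using assms(4) by (simp add: card_1_singleton_iff)
qed

lemma obtain_distinct_list:
  assumes "finite S" and "n \<le> card S"
  obtains xs where "distinct xs" "length xs = n" "set xs \<subseteq> S"
proof -
  obtain T where T: "T \<subseteq> S" "card T = n" using obtain_subset_with_card_n[OF assms(2)] by blast
  then obtain xs where xs: "set xs = T" "distinct xs"
    using finite_distinct_list finite_subset[OF T(1) assms(1)] by blast
  then have "length xs = n" using distinct_card[OF xs(2)] T(2) by simp
  then show ?thesis using that xs T(1) by blast
qed

lemma obtain_map_preimage:
  assumes "\<And>y. y \<in> set ys \<Longrightarrow> \<exists>x\<in>A. f x = y"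
  obtains xs where "set xs \<subseteq> A" "map f xs = ys"
proof -
  have "\<exists>xs. set xs \<subseteq> A \<and> map f xs = ys"
    using assms
  proof (induction ys)
    case Nil
    show ?case by simp
  next
    case (Cons y ys)
    then obtain x xs where "x \<in> A" "f x = y" "set xs \<subseteq> A" "map f xs = ys" by force
    then show ?case by (intro exI[of _ "x # xs"]) simp
  qed
  then show ?thesis using that by blast
qed

lemma ex_bij_betw_extension:
  assumes "finite X" and "A \<subseteq> X" and "B \<subseteq> X" and f: "bij_betw f A B"
  shows "\<exists>\<sigma>. bij_betw \<sigma> X X \<and> (\<forall>x\<in>A. \<sigma> x = f x)"
proof -
  have "card (X - A) = card (X - B)"
    using assms bij_betw_same_card[OF f] by (simp add: card_Diff_subset finite_subset)
  then obtain g where "bij_betw g (X - A) (X - B)"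
    using finite_same_card_bij \<open>finite X\<close> by blast
  then have "bij_betw (\<lambda>x. if x \<in> A then f x else g x) (A \<union> (X - A)) (B \<union> (X - B))"
    by (intro bij_betw_disjoint_Un[OF f]) auto
  moreover have "A \<union> (X - A) = X" "B \<union> (X - B) = X" using assms by auto
  ultimately show ?thesis by force
qed

lemma ex_permutation_moving:
  assumes "finite X" and "A \<subseteq> X" and "B \<subseteq> X" and "card A = card B"
    and "l \<in> X - A" and "r \<in> X - A" and "l \<noteq> r"
    and "l' \<in> X - B" and "r' \<in> X - B" and "l' \<noteq> r'"
  shows "\<exists>\<sigma>. bij_betw \<sigma> X X \<and> \<sigma> ` A = B \<and> \<sigma> l = l' \<and> \<sigma> r = r'"
proof -
  obtain g where g: "bij_betw g A B"
    using finite_same_card_bij assms(1-4) finite_subset by metis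
  have "bij_betw (\<lambda>x. if x = l then l' else r') {l, r} {l', r'}"
    using assms(7,10) by (auto simp: bij_betw_def inj_on_def)
  then have "bij_betw (\<lambda>x. if x \<in> A then g x else if x = l then l' else r') (A \<union> {l, r}) (B \<union> {l', r'})"
    using assms by (intro bij_betw_disjoint_Un[OF g]) auto
  then obtain \<sigma> where "bij_betw \<sigma> X X"
      and \<sigma>: "\<forall>x\<in>A \<union> {l, r}. \<sigma> x = (if x \<in> A then g x else if x = l then l' else r')"
    using ex_bij_betw_extension[of X "A \<union> {l, r}" "B \<union> {l', r'}"] assms by blast
  moreover have "\<sigma> ` A = g ` A" using \<sigma> by (auto intro: image_cong)
  then have "\<sigma> ` A = B" using bij_betw_imp_surj_on[OF g] by simp
  ultimately show ?thesis using \<sigma> assms by auto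
qed

locale symmetric_choice_family =
  fixes X :: "'a set" and k :: nat and C :: "('a set \<Rightarrow> 'a) set"
  assumes finite_X: "finite X"
    and nonempty: "C \<noteq> {}"
    and choice_funs: "c \<in> C \<Longrightarrow> choice_fun X k c"
    and symmetric: "symmetric_family X k C"
begin

abbreviation K :: "'a set set" where
  "K \<equiv> ksubsets X k"

lemma choice_in: "c \<in> C \<Longrightarrow> Y \<in> K \<Longrightarrow> c Y \<in> Y"
  using choice_funs by (auto simp: choice_fun_def)

lemma K_subset: "Y \<in> K \<Longrightarrow> Y \<subseteq> X"
  by (simp add: ksubsets_def)

lemma perm_act_in: "bij_betw \<pi> X X \<Longrightarrow> c \<in> C \<Longrightarrow> perm_act X k \<pi> c \<in> C"
  using symmetric by (auto simp: symmetric_family_def)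

lemma ex_choice_at:
  assumes Y: "Y \<in> K" and z: "z \<in> Y"
  shows "\<exists>c\<in>C. c Y = z"
proof -
  obtain c where c: "c \<in> C" using nonempty by blast
  let ?\<pi> = "transpose (c Y) z"
  have "c Y \<in> Y" using choice_in[OF c Y] .
  then have \<pi>: "bij_betw ?\<pi> X X" and "?\<pi> ` Y = Y"
    using z K_subset[OF Y] by (auto intro: bij_betw_transpose_iff)
  then have "perm_act X k ?\<pi> c Y = z"
    using perm_act_eq_iff[OF \<pi> choice_funs[OF c] Y] z K_subset[OF Y] by auto
  then show ?thesis using perm_act_in[OF \<pi> c] by blast
qed

definition attained :: "'a set \<Rightarrow> 'a set \<Rightarrow> 'a \<Rightarrow> 'a \<Rightarrow> bool" where
  "attained Y0 Y1 x y \<longleftrightarrow> (\<exists>c\<in>C. c Y0 = x \<and> c Y1 = y)"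

lemma attainedI: "c \<in> C \<Longrightarrow> attained Y0 Y1 (c Y0) (c Y1)"
  by (auto simp: attained_def)

lemma attained_perm:
  assumes \<pi>: "bij_betw \<pi> X X" and Y0: "Y0 \<in> K" and Y1: "Y1 \<in> K" and "x \<in> X" "y \<in> X"
    and "attained (\<pi> ` Y0) (\<pi> ` Y1) (\<pi> x) (\<pi> y)"
  shows "attained Y0 Y1 x y"
proof -
  obtain c where c: "c \<in> C" "c (\<pi> ` Y0) = \<pi> x" "c (\<pi> ` Y1) = \<pi> y"
    using assms(6) by (auto simp: attained_def)
  then have "perm_act X k \<pi> c Y0 = x" "perm_act X k \<pi> c Y1 = y"
    using perm_act_eq_iff[OF \<pi> choice_funs[OF c(1)]] Y0 Y1 assms(4,5) by auto
  then show ?thesis using perm_act_in[OF \<pi> c(1)] by (auto simp: attained_def)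
qed

lemma attained_transpose:
  assumes "attained Y0 Y1 a y" and Y0: "Y0 \<in> K" and Y1: "Y1 \<in> K" and "a \<in> X" "b \<in> X"
    and "a \<in> Y0 \<longleftrightarrow> b \<in> Y0" and "a \<in> Y1 \<longleftrightarrow> b \<in> Y1" and "y \<noteq> a" "y \<noteq> b"
  shows "attained Y0 Y1 b y"
proof (rule attained_perm[where \<pi> = "transpose a b"])
  show "y \<in> X" using assms(1) choice_in K_subset[OF Y1] Y1 by (auto simp: attained_def)
  then show "attained (transpose a b ` Y0) (transpose a b ` Y1) (transpose a b b) (transpose a b y)"
    using assms by simp
qed (use assms in auto)

definition rigid_exchange :: "'a set \<Rightarrow> 'a \<Rightarrow> 'a \<Rightarrow> bool" where
  "rigid_exchange B l r \<longleftrightarrow>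
     (\<forall>c\<in>C. (c (insert l B) \<in> B \<longrightarrow> c (insert r B) = c (insert l B)) \<and>
            (c (insert l B) = l \<longrightarrow> c (insert r B) = r))"

lemma rigid_exchange_perm:
  assumes \<pi>: "bij_betw \<pi> X X" and B: "B \<subseteq> X" "card B + 1 = k"
    and l: "l \<in> X - B" and r: "r \<in> X - B" and rigid: "rigid_exchange B l r"
  shows "rigid_exchange (\<pi> ` B) (\<pi> l) (\<pi> r)"
  unfolding rigid_exchange_def
proof (intro ballI conjI impI)
  fix c assume c: "c \<in> C"
  have inj: "inj_on \<pi> X" using \<pi> by (rule bij_betw_imp_inj_on)
  have Yl: "insert l B \<in> K" and Yr: "insert r B \<in> K"
    using insert_in_ksubsets[OF finite_X B] l r by auto
  define a where "a = perm_act X k \<pi> c (insert l B)"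
  define b where "b = perm_act X k \<pi> c (insert r B)"
  have "a \<in> insert l B" "b \<in> insert r B"
    unfolding a_def b_def using choice_in perm_act_in[OF \<pi> c] Yl Yr by auto
  then have ab: "a \<in> X" "b \<in> X" using B l r by auto
  have "c (\<pi> ` insert l B) = \<pi> a" "c (\<pi> ` insert r B) = \<pi> b"
    using perm_act_eq_iff[OF \<pi> choice_funs[OF c]] Yl Yr ab a_def b_def by blast+
  then have ca: "c (insert (\<pi> l) (\<pi> ` B)) = \<pi> a" and cb: "c (insert (\<pi> r) (\<pi> ` B)) = \<pi> b"
    by simp_all
  have rigid_ab: "(a \<in> B \<longrightarrow> b = a) \<and> (a = l \<longrightarrow> b = r)"
    using rigid perm_act_in[OF \<pi> c] unfolding rigid_exchange_def a_def b_def by blast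
  show "c (insert (\<pi> r) (\<pi> ` B)) = c (insert (\<pi> l) (\<pi> ` B))"
    if "c (insert (\<pi> l) (\<pi> ` B)) \<in> \<pi> ` B"
  proof -
    have "a \<in> B" using that ca inj_on_image_mem_iff[OF inj ab(1) B(1)] by simp
    then show ?thesis using rigid_ab ca cb by simp
  qed
  show "c (insert (\<pi> r) (\<pi> ` B)) = \<pi> r" if "c (insert (\<pi> l) (\<pi> ` B)) = \<pi> l"
  proof -
    have "a = l" using that ca inj_onD[OF inj _ ab(1)] l by simp
    then show ?thesis using rigid_ab cb by simp
  qed
qed

lemma rigid_exchange_transfer:
  assumes rigid: "rigid_exchange A l r"
    and A: "A \<subseteq> X" "card A + 1 = k" and l: "l \<in> X - A" and r: "r \<in> X - A" "l \<noteq> r"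
    and B: "B \<subseteq> X" "card B + 1 = k" and l': "l' \<in> X - B" and r': "r' \<in> X - B" "l' \<noteq> r'"
  shows "rigid_exchange B l' r'"
proof -
  obtain \<pi> where \<pi>: "bij_betw \<pi> X X" "\<pi> ` A = B" "\<pi> l = l'" "\<pi> r = r'"
    using ex_permutation_moving[OF finite_X A(1) B(1) _ l r l' r'] A(2) B(2) by auto
  then show ?thesis using rigid_exchange_perm[OF \<pi>(1) A l r(1) rigid] by simp
qed

lemma not_rigid_exchange:
  assumes k: "3 \<le> k" "k < card X" and A: "A \<subseteq> X" "card A + 1 = k"
    and l: "l \<in> X - A" and r: "r \<in> X - A" "l \<noteq> r"
  shows "\<not> rigid_exchange A l r"
proof
  assume "rigid_exchange A l r"
  note rigid_all = rigid_exchange_transfer[OF this A l r]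
  obtain c where c: "c \<in> C" using nonempty by blast
  define Y where "Y = insert l A"
  have Y: "Y \<in> K" using insert_in_ksubsets[OF finite_X A] l Y_def by auto
  have YX: "Y \<subseteq> X" and cardY: "card Y = k" using Y by (simp_all add: ksubsets_def)
  have finY: "finite Y" using finite_subset[OF YX finite_X] .
  define y where "y = c Y"
  have y: "y \<in> Y" using choice_in[OF c Y] y_def by simp
  have "card Y < card X" using k(2) cardY by simp
  then obtain x where x: "x \<in> X - Y" by (metis Diff_iff card_mono[OF finY] not_le subsetI)
  \<comment> \<open>exchanging \<open>y'\<close> for \<open>x\<close> keeps the choice \<open>y\<close>;
    then exchanging \<open>y\<close> for \<open>y'\<close> moves it to \<open>y'\<close>\<close>
  have picks: "c (insert x (Y - {y})) = y'" if y': "y' \<in> Y" "y' \<noteq> y" for y'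
  proof -
    have "rigid_exchange (Y - {y'}) y' x"
      by (rule rigid_all) (use finY cardY k(1) YX x y' in \<open>auto simp: card_Diff_singleton\<close>)
    moreover have "insert y' (Y - {y'}) = Y" using y' by auto
    ultimately have "c (insert x (Y - {y'})) = y"
      using c y y' unfolding rigid_exchange_def y_def by auto
    moreover have "rigid_exchange (insert x (Y - {y, y'})) y y'"
    proof (rule rigid_all)
      have "card (Y - {y, y'}) = k - 2" using finY cardY y y' by (simp add: card_Diff_subset)
      then show "card (insert x (Y - {y, y'})) + 1 = k" using finY x k(1) by simp
    qed (use YX x y y' in auto)
    moreover have "insert y (insert x (Y - {y, y'})) = insert x (Y - {y'})"
      "insert y' (insert x (Y - {y, y'})) = insert x (Y - {y})" using y y' by auto
    ultimately show ?thesis using c unfolding rigid_exchange_def by auto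
  qed
  have "3 \<le> card Y" using cardY k(1) by simp
  then obtain y1 where y1: "y1 \<in> Y" "y1 \<noteq> y" using ex_other_than_two[OF finY] by blast
  obtain y2 where y2: "y2 \<in> Y" "y2 \<noteq> y" "y2 \<noteq> y1"
    using ex_other_than_two[OF finY \<open>3 \<le> card Y\<close>] by blast
  show False using picks[OF y1] picks[OF y2(1,2)] y2(3) by simp
qed

end

locale separated_choice_family = symmetric_choice_family +
  fixes r :: nat
  assumes three_le_r: "3 \<le> r" and r_le_k: "r \<le> k" and four_le_k: "4 \<le> k"
    and k_less_card: "k < card X"
    and separating: "\<And>as. length as = r \<Longrightarrow> set as \<subseteq> X \<Longrightarrow> distinct as \<Longrightarrow>
      \<exists>f. closed_under X k C r f \<and> f as = as ! 1 \<and>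
        (\<forall>bs. length bs = r \<and> set bs \<subseteq> X \<and> \<not> distinct bs \<longrightarrow> f bs = bs ! 0)"
begin

lemma obtain_distinct_padding:
  assumes Y0: "Y0 \<in> K" and "p \<in> C" "q \<in> C" "g \<in> C"
    and distinct0: "distinct [p Y0, q Y0, g Y0]"
  obtains es where "set es \<subseteq> C" "length es = r - 3" "distinct (map (\<lambda>c. c Y0) ([p, q, g] @ es))"
proof -
  have finY0: "finite Y0" using finite_subset[OF K_subset[OF Y0] finite_X] .
  have sub: "{p Y0, q Y0, g Y0} \<subseteq> Y0" using choice_in assms(2-4) Y0 by auto
  have "card (Y0 - {p Y0, q Y0, g Y0}) = k - 3"
    using Y0 finY0 sub distinct0 by (simp add: card_Diff_subset ksubsets_def)
  then have "r - 3 \<le> card (Y0 - {p Y0, q Y0, g Y0})" using r_le_k by simp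
  then obtain ws where ws: "distinct ws" "length ws = r - 3" "set ws \<subseteq> Y0 - {p Y0, q Y0, g Y0}"
    by (rule obtain_distinct_list[OF finite_Diff[OF finY0]])
  have "\<exists>e\<in>C. e Y0 = w" if "w \<in> set ws" for w
    using ex_choice_at[OF Y0] that ws(3) by blast
  then obtain es where es: "set es \<subseteq> C" "map (\<lambda>e. e Y0) es = ws"
    by (rule obtain_map_preimage)
  show ?thesis
  proof (rule that)
    show "length es = r - 3" using ws(2) es(2) by (auto dest: arg_cong[of _ _ length])
    show "distinct (map (\<lambda>c. c Y0) ([p, q, g] @ es))" using es(2) ws distinct0 by auto
  qed (fact es(1))
qed

lemma ex_combination_on_collisions:
  assumes Y0: "Y0 \<in> K" and pqg: "p \<in> C" "q \<in> C" "g \<in> C"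
    and distinct0: "distinct [p Y0, q Y0, g Y0]"
  shows "\<exists>h\<in>C. h Y0 = q Y0 \<and> (\<forall>Y\<in>K. \<not> distinct [p Y, q Y, g Y] \<longrightarrow> h Y = p Y)"
proof -
  obtain es where es: "set es \<subseteq> C" "length es = r - 3"
    and distinct_Y0: "distinct (map (\<lambda>c. c Y0) ([p, q, g] @ es))"
    using obtain_distinct_padding[OF assms] .
  define cs where "cs = [p, q, g] @ es"
  have cs: "set cs \<subseteq> C" "length cs = r" using pqg es three_le_r by (auto simp: cs_def)
  have values_in_X: "set (map (\<lambda>c. c Y) cs) \<subseteq> X" if "Y \<in> K" for Y
    using cs(1) choice_in K_subset[OF that] that by auto
  obtain f where f: "closed_under X k C r f"
      and f_distinct: "f (map (\<lambda>c. c Y0) cs) = map (\<lambda>c. c Y0) cs ! 1"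
      and f_collision: "\<forall>bs. length bs = r \<and> set bs \<subseteq> X \<and> \<not> distinct bs \<longrightarrow> f bs = bs ! 0"
    using separating[of "map (\<lambda>c. c Y0) cs"] cs(2) values_in_X[OF Y0] distinct_Y0
    unfolding cs_def by auto
  define h where "h = (\<lambda>Y. if Y \<in> K then f (map (\<lambda>c. c Y) cs) else undefined)"
  have "h \<in> C" unfolding h_def using closed_under_map[OF f cs] .
  moreover have "h Y0 = q Y0" using Y0 f_distinct by (simp add: h_def cs_def)
  moreover have "h Y = p Y" if Y: "Y \<in> K" and "\<not> distinct [p Y, q Y, g Y]" for Y
  proof -
    have "\<not> distinct (map (\<lambda>c. c Y) cs)" using that(2) by (auto simp: cs_def)
    then have "f (map (\<lambda>c. c Y) cs) = map (\<lambda>c. c Y) cs ! 0"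
      using f_collision cs(2) values_in_X[OF Y] by simp
    then show ?thesis using Y by (simp add: h_def cs_def)
  qed
  ultimately show ?thesis by blast
qed

lemma attained_of_collision:
  assumes Y0: "Y0 \<in> K" and Y1: "Y1 \<in> K"
    and "attained Y0 Y1 x y" "attained Y0 Y1 w y'" "attained Y0 Y1 x' y''"
    and "distinct [x, w, x']" and "\<not> distinct [y, y', y'']"
  shows "attained Y0 Y1 w y"
proof -
  obtain p q g where pqg: "p \<in> C" "q \<in> C" "g \<in> C"
    and at0: "p Y0 = x" "q Y0 = w" "g Y0 = x'" and at1: "p Y1 = y" "q Y1 = y'" "g Y1 = y''"
    using assms(3-5) by (auto simp: attained_def)
  have "distinct [p Y0, q Y0, g Y0]" using assms(6) at0 by simp
  then obtain h where "h \<in> C" "h Y0 = w" "\<forall>Y\<in>K. \<not> distinct [p Y, q Y, g Y] \<longrightarrow> h Y = p Y"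
    using ex_combination_on_collisions[OF Y0 pqg] at0(2) by auto
  moreover have "\<not> distinct [p Y1, q Y1, g Y1]" using assms(7) at1 by simp
  ultimately show ?thesis using Y1 at1(1) by (auto simp: attained_def)
qed

lemma attained_all_of_collision:
  assumes Y0: "Y0 \<in> K" and Y1: "Y1 \<in> K"
    and x1: "attained Y0 Y1 x1 y" and x2: "attained Y0 Y1 x2 y" and "x1 \<noteq> x2"
    and x: "x \<in> Y0" and y': "y' \<in> Y1"
  shows "attained Y0 Y1 x y'"
proof -
  have "finite Y0" using finite_subset[OF K_subset[OF Y0] finite_X] .
  moreover have "3 \<le> card Y0" using Y0 four_le_k by (simp add: ksubsets_def)
  ultimately have other: "\<exists>z\<in>Y0. z \<noteq> a \<and> z \<noteq> b" for a b by (rule ex_other_than_two)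
  have column: "attained Y0 Y1 w y" if w: "w \<in> Y0" for w
  proof (cases "w = x1 \<or> w = x2")
    case True
    then show ?thesis using x1 x2 by auto
  next
    case False
    obtain c where "c \<in> C" "c Y0 = w" using ex_choice_at[OF Y0 w] by blast
    then have "attained Y0 Y1 w (c Y1)" using attainedI by metis
    then show ?thesis using attained_of_collision[OF Y0 Y1 x1 _ x2] False \<open>x1 \<noteq> x2\<close> by auto
  qed
  obtain c where c: "c \<in> C" "c Y1 = y'" using ex_choice_at[OF Y1 y'] by blast
  then have attained_c: "attained Y0 Y1 (c Y0) y'" using attainedI by metis
  show ?thesis
  proof (cases "x = c Y0")
    case True
    then show ?thesis using attained_c by simp
  next
    case False
    obtain x' where "x' \<in> Y0" "x' \<noteq> c Y0" "x' \<noteq> x" using other[of "c Y0" x] by blast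
    then show ?thesis
      using attained_of_collision[OF Y0 Y1 attained_c column[OF x] column[OF \<open>x' \<in> Y0\<close>]] False
      by auto
  qed
qed

lemma rigid_exchange_of_injective:
  assumes A: "A \<subseteq> X" "card A + 1 = k" and a: "a \<in> X - A" and b: "b \<in> X - A"
    and injective: "\<And>x1 x2 y. attained (insert a A) (insert b A) x1 y \<Longrightarrow>
      attained (insert a A) (insert b A) x2 y \<Longrightarrow> x1 = x2"
  shows "rigid_exchange A a b"
proof -
  define Y0 where "Y0 = insert a A"
  define Y1 where "Y1 = insert b A"
  have Y0: "Y0 \<in> K" and Y1: "Y1 \<in> K"
    using insert_in_ksubsets[OF finite_X A] a b by (auto simp: Y0_def Y1_def)
  have inj: "x1 = x2" if "attained Y0 Y1 x1 y" "attained Y0 Y1 x2 y" for x1 x2 y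
    using injective that by (simp add: Y0_def Y1_def)
  have finA: "finite A" using finite_subset[OF A(1) finite_X] .
  have "3 \<le> card A" using A(2) four_le_k by simp
  have stay: "c Y1 = c Y0" if c: "c \<in> C" and "c Y0 \<in> A" for c
  proof (rule ccontr)
    assume "c Y1 \<noteq> c Y0"
    obtain x' where x': "x' \<in> A" "x' \<noteq> c Y0" "x' \<noteq> c Y1"
      using ex_other_than_two[OF finA \<open>3 \<le> card A\<close>, of "c Y0" "c Y1"] by blast
    have "attained Y0 Y1 x' (c Y1)"
      by (rule attained_transpose[OF attainedI[OF c] Y0 Y1])
        (use \<open>c Y0 \<in> A\<close> \<open>c Y1 \<noteq> c Y0\<close> x' A(1) in \<open>auto simp: Y0_def Y1_def\<close>)
    then show False using inj[OF attainedI[OF c]] x'(2) by simp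
  qed
  have follow: "c Y1 = b" if c: "c \<in> C" and "c Y0 = a" for c
  proof (rule ccontr)
    assume "c Y1 \<noteq> b"
    then have "c Y1 \<in> A" using choice_in[OF c Y1] by (simp add: Y1_def)
    then obtain c' where c': "c' \<in> C" "c' Y0 = c Y1" using ex_choice_at[OF Y0] by (auto simp: Y0_def)
    then have "c' Y1 = c Y1" using stay[OF c'(1)] \<open>c Y1 \<in> A\<close> by simp
    then have "attained Y0 Y1 (c Y1) (c Y1)" using attainedI[OF c'(1), of Y0 Y1] c'(2) by simp
    then have "a = c Y1" using inj[OF attainedI[OF c]] \<open>c Y0 = a\<close> by simp
    then show False using \<open>c Y1 \<in> A\<close> a by simp
  qed
  show ?thesis
    unfolding rigid_exchange_def Y0_def[symmetric] Y1_def[symmetric] using stay follow by simp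
qed

lemma attained_all:
  assumes Y0: "Y0 \<in> K" and Y1: "Y1 \<in> K" and "Y0 \<noteq> Y1" and x: "x \<in> Y0" and y: "y \<in> Y1"
  shows "attained Y0 Y1 x y"
proof -
  have "\<exists>x1 x2 y. attained Y0 Y1 x1 y \<and> attained Y0 Y1 x2 y \<and> x1 \<noteq> x2"
  proof (rule ccontr)
    assume "\<not> ?thesis"
    then have injective: "\<And>x1 x2 y. attained Y0 Y1 x1 y \<Longrightarrow> attained Y0 Y1 x2 y \<Longrightarrow> x1 = x2"
      by blast
    have Y0X: "Y0 \<subseteq> X" and Y1X: "Y1 \<subseteq> X" using Y0 Y1 by (simp_all add: K_subset)
    have fin: "finite Y0" "finite Y1" using Y0X Y1X finite_X by (simp_all add: finite_subset)
    have card: "card Y0 = k" "card Y1 = k" using Y0 Y1 by (simp_all add: ksubsets_def)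
    have "\<not> Y0 \<subseteq> Y1" using card_subset_eq[OF fin(2)] card \<open>Y0 \<noteq> Y1\<close> by metis
    then obtain l where l: "l \<in> Y0 - Y1" by blast
    show False
    proof (cases "Y0 - Y1 = {l}")
      case False
      then obtain l' where l': "l' \<in> Y0 - Y1" "l' \<noteq> l" using l by blast
      obtain c where c: "c \<in> C" "c Y0 = l" using ex_choice_at[OF Y0] l by blast
      have "c Y1 \<in> Y1" using choice_in[OF c(1) Y1] .
      then have "attained Y0 Y1 l' (c Y1)"
        by (intro attained_transpose[OF attainedI[OF c(1)] Y0 Y1]) (use c(2) l l' Y0X in auto)
      then show False using injective[OF attainedI[OF c(1)]] c(2) l'(2) by simp
    next
      case True
      then obtain l' where l': "Y1 - Y0 = {l'}" using ex_singleton_diff fin card by metis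
      define A where "A = Y0 \<inter> Y1"
      have Y01: "Y0 = insert l A" "Y1 = insert l' A" using True l' by (auto simp: A_def)
      have ll': "l \<in> X - A" "l' \<in> X - A" "l \<noteq> l'" using Y0X Y1X True l' by (auto simp: A_def)
      have "finite A" using fin(1) by (simp add: A_def)
      then have A: "A \<subseteq> X" "card A + 1 = k"
        using Y0X card(1) Y01(1) ll'(1) by auto
      have "rigid_exchange A l l'"
        using rigid_exchange_of_injective[OF A ll'(1,2) injective[unfolded Y01]] .
      then show False using not_rigid_exchange[OF _ k_less_card A ll'] four_le_k by simp
    qed
  qed
  then obtain x1 x2 y' where "attained Y0 Y1 x1 y'" "attained Y0 Y1 x2 y'" "x1 \<noteq> x2" by blast
  then show ?thesis using attained_all_of_collision[OF Y0 Y1 _ _ _ x y] by simp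
qed

lemma fun_upd_in:
  assumes c: "c \<in> C" and Y0: "Y0 \<in> K" and v: "v \<in> Y0"
  shows "c(Y0 := v) \<in> C"
proof (cases "v = c Y0")
  case True
  then show ?thesis using c by simp
next
  case False
  have "finite Y0" "3 \<le> card Y0"
    using Y0 four_le_k finite_subset[OF K_subset[OF Y0] finite_X] by (simp_all add: ksubsets_def)
  then obtain w where w: "w \<in> Y0" "w \<noteq> c Y0" "w \<noteq> v"
    using ex_other_than_two[of Y0 "c Y0" v] by auto
  have extend: "\<exists>h\<in>C. h Y0 = v \<and> (\<forall>Y\<in>T. h Y = c Y)" if "finite T" "T \<subseteq> K - {Y0}" for T
    using that
  proof (induction T rule: finite_induct)
    case empty
    then show ?case using ex_choice_at[OF Y0 v] by auto
  next
    case (insert Y1 T)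
    then obtain h where h: "h \<in> C" "h Y0 = v" "\<forall>Y\<in>T. h Y = c Y" by auto
    have Y1: "Y1 \<in> K" "Y0 \<noteq> Y1" using insert.prems by auto
    have "attained Y0 Y1 w (c Y1)" using attained_all[OF Y0 Y1 w(1) choice_in[OF c Y1(1)]] .
    then obtain g where g: "g \<in> C" "g Y0 = w" "g Y1 = c Y1" by (auto simp: attained_def)
    have "distinct [c Y0, h Y0, g Y0]" using h(2) g(2) w False by auto
    then obtain h' where h': "h' \<in> C" "h' Y0 = h Y0"
        "\<forall>Y\<in>K. \<not> distinct [c Y, h Y, g Y] \<longrightarrow> h' Y = c Y"
      using ex_combination_on_collisions[OF Y0 c h(1) g(1)] by blast
    have "h' Y = c Y" if "Y \<in> insert Y1 T" for Y
      using that h(3) g(3) h'(3) insert.prems by auto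
    then show ?case using h'(1,2) h(2) by auto
  qed
  have "finite (K - {Y0})" using ksubsets_finite[OF finite_X] by simp
  then obtain h where h: "h \<in> C" "h Y0 = v" "\<forall>Y\<in>K - {Y0}. h Y = c Y"
    using extend[OF _ order_refl] by auto
  have "h = c(Y0 := v)"
    by (rule choice_fun_eqI[OF choice_funs[OF h(1)] choice_fun_upd[OF choice_funs[OF c] Y0 v]])
      (use h in auto)
  then show ?thesis using h(1) by simp
qed

lemma choice_fun_in:
  assumes d: "choice_fun X k d"
  shows "d \<in> C"
proof -
  have extend: "\<exists>h\<in>C. \<forall>Y\<in>T. h Y = d Y" if "finite T" "T \<subseteq> K" for T
    using that
  proof (induction T rule: finite_induct)
    case empty
    then show ?case using nonempty by blast
  next
    case (insert Y T)
    then obtain h where h: "h \<in> C" "\<forall>Y'\<in>T. h Y' = d Y'" by auto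
    have "Y \<in> K" using insert.prems by simp
    moreover have "d Y \<in> Y" using d \<open>Y \<in> K\<close> by (simp add: choice_fun_def)
    ultimately have "h(Y := d Y) \<in> C" by (rule fun_upd_in[OF h(1)])
    then show ?case using h(2) by (intro bexI[of _ "h(Y := d Y)"]) auto
  qed
  obtain h where h: "h \<in> C" "\<forall>Y\<in>K. h Y = d Y"
    using extend[OF ksubsets_finite[OF finite_X] order_refl] by auto
  have "h = d" using choice_fun_eqI[OF choice_funs[OF h(1)] d] h(2) by simp
  then show ?thesis using h(1) by simp
qed

end

theorem lemma12p1:
  fixes X :: "'a set" and r k :: nat
    and F :: "(nat \<times> ('a list \<Rightarrow> 'a)) set"
    and C :: "('a set \<Rightarrow> 'a) set"
  assumes "finite X"
    and "r \<ge> 3" and "k \<ge> r" and "k \<ge> 5"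
    and "card X - k \<ge> max 7 r" and "card X \<ge> k"
    and "is_clone X F"
    and "(\<exists>f. (r, f) \<in> F \<and> agree_on X r f f_r12) \<or>
         (\<forall>as. length as = r \<and> set as \<subseteq> X \<and> distinct as \<longrightarrow>
            (\<exists>f. (r, f) \<in> F \<and> f as = as ! 1 \<and>
               (\<forall>bs. length bs = r \<and> set bs \<subseteq> X \<and> \<not> distinct bs \<longrightarrow> f bs = bs ! 0)))"
    and "C \<noteq> {}"
    and "\<forall>c\<in>C. choice_fun X k c"
    and "symmetric_family X k C"
    and "\<forall>(n, f)\<in>F. closed_under X k C n f"
  shows "\<forall>c. choice_fun X k c \<longrightarrow> c \<in> C"
proof -
  have separating: "\<exists>f. closed_under X k C r f \<and> f as = as ! 1 \<and>
      (\<forall>bs. length bs = r \<and> set bs \<subseteq> X \<and> \<not> distinct bs \<longrightarrow> f bs = bs ! 0)"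
    if as: "length as = r" "set as \<subseteq> X" "distinct as" for as
  proof -
    obtain f where "(r, f) \<in> F" "f as = as ! 1"
      and "\<forall>bs. length bs = r \<and> set bs \<subseteq> X \<and> \<not> distinct bs \<longrightarrow> f bs = bs ! 0"
      using assms(8)
    proof (elim disjE exE conjE)
      fix f assume "(r, f) \<in> F" "agree_on X r f f_r12"
      then show ?thesis using that[of f] as by (simp add: agree_on_def f_r12_def)
    qed (use as that in blast)
    moreover have "closed_under X k C r f" if "(r, f) \<in> F" for f using assms(12) that by auto
    ultimately show ?thesis by blast
  qed
  have "7 \<le> card X - k" using assms(5) by simp
  then have "k < card X" by arith
  then interpret separated_choice_family X k C r
    by unfold_locales (use assms separating in auto)
  show ?thesis using choice_fun_in by blast
qed

end
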